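(* Let $k\ge 0$ be an integer. Every maximal simplex $\sigma$ of $\mathrm{VR}(\mathbb{Z}^2;k)$ is of the form $\sigma=B_{\mathbb{R}^2}[c,\tfrac{k}{2}]\cap\mathbb{Z}^2$, where, for some $i,j\in\mathbb{Z}$, $c=(i,j)$ or $c=(i+\tfrac12,j+\tfrac12)$ if $k$ is even, and $c=(i+\tfrac12,j)$ or $c=(i,j+\tfrac12)$ if $k$ is odd.
   Context: $\mathbb{Z}^2$ and $\mathbb{R}^2$ carry the $l^1$ metric $d((x,y),(x',y'))=|x-x'|+|y-y'|$, and $B_{\mathbb{R}^2}[c,r]=\{p\in\mathbb{R}^2: d(p,c)\le r\}$ is the closed $l^1$ ball. $\mathrm{VR}(X;r)$ is the simplicial complex on vertex set $X$ whose simplices are the finite nonempty subsets of diameter at most $r$; a maximal simplex is one not properly contained in another simplex. *)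

theory Defs
  imports "HOL-Analysis.Analysis"
begin

definition l1_dist :: "real \<times> real \<Rightarrow> real \<times> real \<Rightarrow> real" where
  "l1_dist p q = \<bar>fst p - fst q\<bar> + \<bar>snd p - snd q\<bar>"

definition int_pt :: "int \<times> int \<Rightarrow> real \<times> real" where
  "int_pt p = (real_of_int (fst p), real_of_int (snd p))"

definition Z2 :: "(real \<times> real) set" where
  "Z2 = range int_pt"

definition l1_cball :: "real \<times> real \<Rightarrow> real \<Rightarrow> (real \<times> real) set" where
  "l1_cball c r = {p. l1_dist p c \<le> r}"

definition vr_simplex :: "('a \<Rightarrow> 'a \<Rightarrow> real) \<Rightarrow> 'a set \<Rightarrow> real \<Rightarrow> 'a set \<Rightarrow> bool" where
  "vr_simplex d X r \<sigma> \<longleftrightarrow> \<sigma> \<subseteq> X \<and> finite \<sigma> \<and> \<sigma> \<noteq> {} \<and> (\<forall>p\<in>\<sigma>. \<forall>q\<in>\<sigma>. d p q \<le> r)"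

definition vr_maximal_simplex :: "('a \<Rightarrow> 'a \<Rightarrow> real) \<Rightarrow> 'a set \<Rightarrow> real \<Rightarrow> 'a set \<Rightarrow> bool" where
  "vr_maximal_simplex d X r \<sigma> \<longleftrightarrow> vr_simplex d X r \<sigma> \<and>
     (\<forall>\<tau>. vr_simplex d X r \<tau> \<and> \<sigma> \<subseteq> \<tau> \<longrightarrow> \<tau> = \<sigma>)"

end

theory Submission
  imports Defs
begin

text \<open>In the coordinates \<open>u = x + y\<close>, \<open>v = x - y\<close> the \<open>l\<^sup>1\<close> metric becomes the \<open>l\<^sup>\<infinity>\<close>
  metric, and \<open>l\<^sup>1\<close> balls become axis-parallel squares. A finite set \<sigma> of diameter at most
  \<open>k\<close> therefore lies in the square \<open>a \<le> u \<le> a + k\<close>, \<open>b \<le> v \<le> b + k\<close>, where \<open>a\<close> and \<open>b\<close>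
  are the minima of \<open>u\<close> and \<open>v\<close> on \<sigma>; this square is the ball of radius \<open>k/2\<close> about
  \<open>((a + b + k)/2, (a - b)/2)\<close>, and its lattice points again have diameter at most \<open>k\<close>.
  By maximality \<sigma> is this set of lattice points. For \<sigma> in the lattice, \<open>a\<close> and \<open>b\<close> are
  integers, and \<open>a + b + k \<equiv> a - b\<close> (mod 2) exactly when \<open>k\<close> is even, which gives
  the two possible shapes of the centre.\<close>

lemma l1_dist_le_iff:
  "l1_dist p c \<le> r \<longleftrightarrow>
     \<bar>(fst p + snd p) - (fst c + snd c)\<bar> \<le> r \<and> \<bar>(fst p - snd p) - (fst c - snd c)\<bar> \<le> r"
  unfolding l1_dist_def by (auto simp: abs_if)

lemma l1_dist_le_of_mem_l1_cball:
  assumes "p \<in> l1_cball c r" and "q \<in> l1_cball c r"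
  shows "l1_dist p q \<le> 2 * r"
proof -
  have "\<bar>fst p - fst q\<bar> \<le> \<bar>fst p - fst c\<bar> + \<bar>fst q - fst c\<bar>"
    "\<bar>snd p - snd q\<bar> \<le> \<bar>snd p - snd c\<bar> + \<bar>snd q - snd c\<bar>"
    by linarith+
  then show ?thesis using assms unfolding l1_cball_def l1_dist_def by simp
qed

lemma finite_l1_cball_Int_Z2: "finite (l1_cball c r \<inter> Z2)"
proof -
  let ?box = "{\<lfloor>fst c - r\<rfloor>..\<lceil>fst c + r\<rceil>} \<times> {\<lfloor>snd c - r\<rfloor>..\<lceil>snd c + r\<rceil>}"
  have "l1_cball c r \<inter> Z2 \<subseteq> int_pt ` ?box"
  proof
    fix p assume "p \<in> l1_cball c r \<inter> Z2"
    then obtain m n where p: "p = int_pt (m, n)"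
      and dist: "\<bar>real_of_int m - fst c\<bar> + \<bar>real_of_int n - snd c\<bar> \<le> r"
      unfolding Z2_def l1_cball_def by (auto simp: l1_dist_def int_pt_def)
    then have "(m, n) \<in> ?box"
      by (auto simp: floor_le_iff le_ceiling_iff)
    then show "p \<in> int_pt ` ?box" using p by blast
  qed
  then show ?thesis by (rule finite_subset) simp
qed

lemma vr_simplex_l1_cball_Int_Z2:
  assumes "l1_cball c r \<inter> Z2 \<noteq> {}"
  shows "vr_simplex l1_dist Z2 (2 * r) (l1_cball c r \<inter> Z2)"
  using assms finite_l1_cball_Int_Z2 l1_dist_le_of_mem_l1_cball
  unfolding vr_simplex_def by blast

lemma subset_l1_cball_of_diameter_le:
  assumes "finite \<sigma>" "\<sigma> \<noteq> {}" and diam: "\<And>p q. p \<in> \<sigma> \<Longrightarrow> q \<in> \<sigma> \<Longrightarrow> l1_dist p q \<le> r"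
  obtains a b where "a \<in> (\<lambda>p. fst p + snd p) ` \<sigma>" "b \<in> (\<lambda>p. fst p - snd p) ` \<sigma>"
    "\<sigma> \<subseteq> l1_cball ((a + b + r) / 2, (a - b) / 2) (r / 2)"
proof
  define a where "a = Min ((\<lambda>p. fst p + snd p) ` \<sigma>)"
  define b where "b = Min ((\<lambda>p. fst p - snd p) ` \<sigma>)"
  show a_mem: "a \<in> (\<lambda>p. fst p + snd p) ` \<sigma>" and b_mem: "b \<in> (\<lambda>p. fst p - snd p) ` \<sigma>"
    unfolding a_def b_def using assms by simp_all
  show "\<sigma> \<subseteq> l1_cball ((a + b + r) / 2, (a - b) / 2) (r / 2)"
  proof
    fix p assume p: "p \<in> \<sigma>"
    have "a \<le> fst p + snd p" "b \<le> fst p - snd p"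
      unfolding a_def b_def using assms(1) p by simp_all
    moreover have "fst p + snd p \<le> a + r"
    proof -
      obtain q where "q \<in> \<sigma>" "a = fst q + snd q" using a_mem by blast
      then show ?thesis using diam[OF p \<open>q \<in> \<sigma>\<close>] by (auto simp: l1_dist_le_iff abs_le_iff)
    qed
    moreover have "fst p - snd p \<le> b + r"
    proof -
      obtain q where "q \<in> \<sigma>" "b = fst q - snd q" using b_mem by blast
      then show ?thesis using diam[OF p \<open>q \<in> \<sigma>\<close>] by (auto simp: l1_dist_le_iff abs_le_iff)
    qed
    ultimately show "p \<in> l1_cball ((a + b + r) / 2, (a - b) / 2) (r / 2)"
      unfolding l1_cball_def l1_dist_le_iff by (simp add: field_simps abs_le_iff)
  qed
qed

lemma lattice_l1_center_cases:
  fixes A B :: int and k :: nat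
  assumes "c = ((real_of_int A + real_of_int B + real k) / 2, (real_of_int A - real_of_int B) / 2)"
  shows "\<exists>i j. if even k
           then c = (real_of_int i, real_of_int j) \<or> c = (real_of_int i + 1/2, real_of_int j + 1/2)
           else c = (real_of_int i + 1/2, real_of_int j) \<or> c = (real_of_int i, real_of_int j + 1/2)"
proof -
  define i s where "i = (A + B + int k) div 2" and "s = (A + B + int k) mod 2"
  define j t where "j = (A - B) div 2" and "t = (A - B) mod 2"
  have i: "A + B + int k = 2 * i + s" "s = 0 \<or> s = 1"
    unfolding i_def s_def by presburger+
  have j: "A - B = 2 * j + t" "t = 0 \<or> t = 1"
    unfolding j_def t_def by presburger+
  have "even k \<longleftrightarrow> s = t" using i j by presburger
  moreover have "c = ((2 * real_of_int i + real_of_int s) / 2, (2 * real_of_int j + real_of_int t) / 2)"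
    using assms arg_cong[OF i(1), of real_of_int] arg_cong[OF j(1), of real_of_int] by simp
  ultimately show ?thesis
    using i(2) j(2) by (intro exI[of _ i] exI[of _ j]) auto
qed

theorem proposition4p2:
  fixes k :: nat and \<sigma> :: "(real \<times> real) set"
  assumes "vr_maximal_simplex l1_dist Z2 (real k) \<sigma>"
  shows "\<exists>c i j. \<sigma> = l1_cball c (real k / 2) \<inter> Z2 \<and>
           (if even k
            then c = (real_of_int i, real_of_int j) \<or> c = (real_of_int i + 1/2, real_of_int j + 1/2)
            else c = (real_of_int i + 1/2, real_of_int j) \<or> c = (real_of_int i, real_of_int j + 1/2))"
proof -
  have "\<sigma> \<subseteq> Z2" "finite \<sigma>" "\<sigma> \<noteq> {}"
    and diam: "\<And>p q. p \<in> \<sigma> \<Longrightarrow> q \<in> \<sigma> \<Longrightarrow> l1_dist p q \<le> real k"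
    and maximal: "\<And>\<tau>. vr_simplex l1_dist Z2 (real k) \<tau> \<Longrightarrow> \<sigma> \<subseteq> \<tau> \<Longrightarrow> \<tau> = \<sigma>"
    using assms unfolding vr_maximal_simplex_def vr_simplex_def by blast+
  obtain a b where a: "a \<in> (\<lambda>p. fst p + snd p) ` \<sigma>" and b: "b \<in> (\<lambda>p. fst p - snd p) ` \<sigma>"
    and cover: "\<sigma> \<subseteq> l1_cball ((a + b + real k) / 2, (a - b) / 2) (real k / 2)"
    using subset_l1_cball_of_diameter_le[OF \<open>finite \<sigma>\<close> \<open>\<sigma> \<noteq> {}\<close> diam] by blast
  define c where "c = ((a + b + real k) / 2, (a - b) / 2)"
  have "a \<in> \<int>" "b \<in> \<int>"
    using a b \<open>\<sigma> \<subseteq> Z2\<close> unfolding Z2_def int_pt_def by auto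
  then obtain A B where AB: "a = real_of_int A" "b = real_of_int B"
    by (metis Ints_cases)
  have center: "\<exists>i j. if even k
      then c = (real_of_int i, real_of_int j) \<or> c = (real_of_int i + 1/2, real_of_int j + 1/2)
      else c = (real_of_int i + 1/2, real_of_int j) \<or> c = (real_of_int i, real_of_int j + 1/2)"
    by (rule lattice_l1_center_cases[of _ A B]) (simp add: c_def AB)
  have "vr_simplex l1_dist Z2 (2 * (real k / 2)) (l1_cball c (real k / 2) \<inter> Z2)"
    using cover \<open>\<sigma> \<subseteq> Z2\<close> \<open>\<sigma> \<noteq> {}\<close> unfolding c_def by (intro vr_simplex_l1_cball_Int_Z2) blast
  then have "\<sigma> = l1_cball c (real k / 2) \<inter> Z2"
    using maximal cover \<open>\<sigma> \<subseteq> Z2\<close> unfolding c_def by auto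
  with center show ?thesis by blast
qed

end
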